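(* Every topos is strongly amendable.
   Context: A category is amendable if for every morphism $t_L : L \to L'$ there is a factorization $t_L = \beta \circ t_L'$ with $t_L' : L \rightarrowtail L''$ mono and $\beta : L'' \to L'$ such that for every factorization $t_L = \alpha \circ m$ with $m : L \rightarrowtail G_L$ mono and $\alpha : G_L \to L'$ there exists $\alpha' : G_L \to L''$ with $\alpha' \circ m = t_L'$ and $\beta \circ \alpha' = \alpha$. It is strongly amendable if the factorization $(t_L',\beta)$ can be chosen so that moreover, for every such $(m,\alpha)$, the corresponding $\alpha'$ can be chosen so that $L \xleftarrow{1_L} L \xrightarrow{m} G_L$ is a pullback of $L \xrightarrow{t_L'} L'' \xleftarrow{\alpha'} G_L$. *)

theory Defs
  imports Main
begin

text \<open>A (possibly large) category presented by a set of objects, a set of arrows,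
  domain/codomain maps, composition (Cmp C g f means g after f) and identities.\<close>

record ('o, 'a) category =
  Obj :: "'o set"
  Arr :: "'a set"
  Dom :: "'a \<Rightarrow> 'o"
  Cod :: "'a \<Rightarrow> 'o"
  Cmp :: "'a \<Rightarrow> 'a \<Rightarrow> 'a"
  Idt :: "'o \<Rightarrow> 'a"

definition hom :: "('o, 'a) category \<Rightarrow> 'o \<Rightarrow> 'o \<Rightarrow> 'a set" where
  "hom C x y = {f \<in> Arr C. Dom C f = x \<and> Cod C f = y}"

definition is_category :: "('o, 'a) category \<Rightarrow> bool" where
  "is_category C \<longleftrightarrow>
     (\<forall>f\<in>Arr C. Dom C f \<in> Obj C \<and> Cod C f \<in> Obj C) \<and>
     (\<forall>x\<in>Obj C. Idt C x \<in> hom C x x) \<and>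
     (\<forall>f\<in>Arr C. \<forall>g\<in>Arr C. Cod C f = Dom C g \<longrightarrow> Cmp C g f \<in> hom C (Dom C f) (Cod C g)) \<and>
     (\<forall>f\<in>Arr C. Cmp C f (Idt C (Dom C f)) = f \<and> Cmp C (Idt C (Cod C f)) f = f) \<and>
     (\<forall>f\<in>Arr C. \<forall>g\<in>Arr C. \<forall>h\<in>Arr C. Cod C f = Dom C g \<longrightarrow> Cod C g = Dom C h \<longrightarrow>
        Cmp C h (Cmp C g f) = Cmp C (Cmp C h g) f)"

definition monic :: "('o, 'a) category \<Rightarrow> 'a \<Rightarrow> bool" where
  "monic C m \<longleftrightarrow> m \<in> Arr C \<and>
     (\<forall>g\<in>Arr C. \<forall>h\<in>Arr C. Cod C g = Dom C m \<longrightarrow> Cod C h = Dom C m \<longrightarrow> Dom C g = Dom C h \<longrightarrow>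
        Cmp C m g = Cmp C m h \<longrightarrow> g = h)"

definition terminal :: "('o, 'a) category \<Rightarrow> 'o \<Rightarrow> bool" where
  "terminal C t \<longleftrightarrow> t \<in> Obj C \<and> (\<forall>x\<in>Obj C. \<exists>!f. f \<in> hom C x t)"

definition is_pullback :: "('o, 'a) category \<Rightarrow> 'a \<Rightarrow> 'a \<Rightarrow> 'a \<Rightarrow> 'a \<Rightarrow> bool" where
  "is_pullback C f g p q \<longleftrightarrow>
     f \<in> Arr C \<and> g \<in> Arr C \<and> p \<in> Arr C \<and> q \<in> Arr C \<and>
     Cod C f = Cod C g \<and> Cod C p = Dom C f \<and> Cod C q = Dom C g \<and> Dom C p = Dom C q \<and>
     Cmp C f p = Cmp C g q \<and>
     (\<forall>p'\<in>Arr C. \<forall>q'\<in>Arr C. Cod C p' = Dom C f \<longrightarrow> Cod C q' = Dom C g \<longrightarrow> Dom C p' = Dom C q' \<longrightarrow>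
        Cmp C f p' = Cmp C g q' \<longrightarrow>
        (\<exists>!u. u \<in> hom C (Dom C p') (Dom C p) \<and> Cmp C p u = p' \<and> Cmp C q u = q'))"

definition has_pullbacks :: "('o, 'a) category \<Rightarrow> bool" where
  "has_pullbacks C \<longleftrightarrow>
     (\<forall>f\<in>Arr C. \<forall>g\<in>Arr C. Cod C f = Cod C g \<longrightarrow> (\<exists>p q. is_pullback C f g p q))"

definition is_product :: "('o, 'a) category \<Rightarrow> 'o \<Rightarrow> 'o \<Rightarrow> 'a \<Rightarrow> 'a \<Rightarrow> bool" where
  "is_product C A B p1 p2 \<longleftrightarrow>
     A \<in> Obj C \<and> B \<in> Obj C \<and> p1 \<in> Arr C \<and> p2 \<in> Arr C \<and>
     Dom C p1 = Dom C p2 \<and> Cod C p1 = A \<and> Cod C p2 = B \<and>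
     (\<forall>f\<in>Arr C. \<forall>g\<in>Arr C. Cod C f = A \<longrightarrow> Cod C g = B \<longrightarrow> Dom C f = Dom C g \<longrightarrow>
        (\<exists>!u. u \<in> hom C (Dom C f) (Dom C p1) \<and> Cmp C p1 u = f \<and> Cmp C p2 u = g))"

definition has_binary_products :: "('o, 'a) category \<Rightarrow> bool" where
  "has_binary_products C \<longleftrightarrow> (\<forall>A\<in>Obj C. \<forall>B\<in>Obj C. \<exists>p1 p2. is_product C A B p1 p2)"

text \<open>Cartesian closedness: for all B, D there is an exponential E = D^B with evaluation
  ev : E x B -> D such that every f : A x B -> D factors uniquely as ev o (g x 1_B).\<close>
definition cartesian_closed :: "('o, 'a) category \<Rightarrow> bool" where
  "cartesian_closed C \<longleftrightarrow> has_binary_products C \<and>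
     (\<forall>B\<in>Obj C. \<forall>D\<in>Obj C. \<exists>E ev \<pi>1 \<pi>2. is_product C E B \<pi>1 \<pi>2 \<and> ev \<in> hom C (Dom C \<pi>1) D \<and>
        (\<forall>A\<in>Obj C. \<forall>q1 q2. is_product C A B q1 q2 \<longrightarrow>
           (\<forall>f\<in>hom C (Dom C q1) D. \<exists>!g. g \<in> hom C A E \<and>
              (\<exists>h\<in>hom C (Dom C q1) (Dom C \<pi>1).
                 Cmp C \<pi>1 h = Cmp C g q1 \<and> Cmp C \<pi>2 h = q2 \<and> Cmp C ev h = f))))"

definition has_subobject_classifier :: "('o, 'a) category \<Rightarrow> bool" where
  "has_subobject_classifier C \<longleftrightarrow>
     (\<exists>one \<Omega> tr. terminal C one \<and> \<Omega> \<in> Obj C \<and> tr \<in> hom C one \<Omega> \<and>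
        (\<forall>m. monic C m \<longrightarrow>
           (\<exists>!\<chi>. \<chi> \<in> hom C (Cod C m) \<Omega> \<and> (\<exists>u. is_pullback C \<chi> tr m u))))"

definition topos :: "('o, 'a) category \<Rightarrow> bool" where
  "topos C \<longleftrightarrow> is_category C \<and> (\<exists>t. terminal C t) \<and> has_pullbacks C \<and>
     cartesian_closed C \<and> has_subobject_classifier C"

definition amendable :: "('o, 'a) category \<Rightarrow> bool" where
  "amendable C \<longleftrightarrow>
     (\<forall>tL\<in>Arr C. \<exists>t' \<beta>. monic C t' \<and> Dom C t' = Dom C tL \<and> \<beta> \<in> hom C (Cod C t') (Cod C tL) \<and>
        Cmp C \<beta> t' = tL \<and>
        (\<forall>m \<alpha>. monic C m \<and> Dom C m = Dom C tL \<and> \<alpha> \<in> hom C (Cod C m) (Cod C tL) \<and> Cmp C \<alpha> m = tL \<longrightarrow>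
           (\<exists>\<alpha>'. \<alpha>' \<in> hom C (Cod C m) (Cod C t') \<and> Cmp C \<alpha>' m = t' \<and> Cmp C \<beta> \<alpha>' = \<alpha>)))"

text \<open>Strongly amendable: additionally L <-1- L -m-> G_L is a pullback of
  L -t'-> L'' <-alpha'- G_L.\<close>
definition strongly_amendable :: "('o, 'a) category \<Rightarrow> bool" where
  "strongly_amendable C \<longleftrightarrow>
     (\<forall>tL\<in>Arr C. \<exists>t' \<beta>. monic C t' \<and> Dom C t' = Dom C tL \<and> \<beta> \<in> hom C (Cod C t') (Cod C tL) \<and>
        Cmp C \<beta> t' = tL \<and>
        (\<forall>m \<alpha>. monic C m \<and> Dom C m = Dom C tL \<and> \<alpha> \<in> hom C (Cod C m) (Cod C tL) \<and> Cmp C \<alpha> m = tL \<longrightarrow>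
           (\<exists>\<alpha>'. \<alpha>' \<in> hom C (Cod C m) (Cod C t') \<and> Cmp C \<alpha>' m = t' \<and> Cmp C \<beta> \<alpha>' = \<alpha> \<and>
              is_pullback C t' \<alpha>' (Idt C (Dom C tL)) m)))"

end

theory Submission
  imports Defs
begin

text \<open>Let \<open>PL = \<Omega>\<^sup>L\<close> be the power object of \<open>L\<close> and \<open>s : L \<rightarrow> PL\<close> the singleton map, the
  transpose of the characteristic map of the diagonal \<open>L \<rightarrow> L \<times> L\<close>. For a mono \<open>m : L \<rightarrow> G\<close> let
  \<open>c : G \<rightarrow> PL\<close> be the transpose of the characteristic map of the graph \<open>\<langle>m, 1\<rangle> : L \<rightarrow> G \<times> L\<close>.
  The diagonal is the pullback of the graph along \<open>m \<times> 1\<close>, hence \<open>c m = s\<close>; and if \<open>s x = c g\<close>,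
  then evaluating at \<open>\<langle>1, x\<rangle>\<close> shows that \<open>\<langle>g, x\<rangle>\<close> factors through the graph, i.e. \<open>g = m x\<close>.
  So every mono out of \<open>L\<close> is a pullback of \<open>s\<close>.

  Given \<open>t\<^sub>L : L \<rightarrow> L'\<close>, take \<open>t' = \<langle>s, t\<^sub>L\<rangle> : L \<rightarrow> PL \<times> L'\<close>, monic because \<open>s\<close> is, and \<open>\<beta>\<close>
  the projection onto \<open>L'\<close>. For \<open>t\<^sub>L = \<alpha> m\<close> with \<open>m\<close> monic take \<open>\<alpha>' = \<langle>c, \<alpha>\<rangle>\<close>: the square
  \<open>t' 1 = \<alpha>' m\<close> is a pullback because the one formed by \<open>s\<close>, \<open>c\<close>, \<open>1\<close> and \<open>m\<close> is.\<close>

lemma ex1_unique: "\<lbrakk>\<exists>!x. P x; P a; P b\<rbrakk> \<Longrightarrow> a = b"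
  by blast

locale category =
  fixes C :: "('o, 'a) category"
  assumes is_category: "is_category C"
begin

abbreviation comp (infixr "\<cdot>" 55) where "g \<cdot> f \<equiv> Cmp C g f"

lemma in_hom_iff [simp]: "f \<in> hom C x y \<longleftrightarrow> f \<in> Arr C \<and> Dom C f = x \<and> Cod C f = y"
  unfolding hom_def by blast

lemma Dom_in_Obj [simp]: "f \<in> Arr C \<Longrightarrow> Dom C f \<in> Obj C"
  and Cod_in_Obj [simp]: "f \<in> Arr C \<Longrightarrow> Cod C f \<in> Obj C"
  and Idt_in_Arr [simp]: "x \<in> Obj C \<Longrightarrow> Idt C x \<in> Arr C"
  and Dom_Idt [simp]: "x \<in> Obj C \<Longrightarrow> Dom C (Idt C x) = x"
  and Cod_Idt [simp]: "x \<in> Obj C \<Longrightarrow> Cod C (Idt C x) = x"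
  and comp_in_Arr [simp]: "\<lbrakk>f \<in> Arr C; g \<in> Arr C; Cod C f = Dom C g\<rbrakk> \<Longrightarrow> g \<cdot> f \<in> Arr C"
  and Dom_comp [simp]: "\<lbrakk>f \<in> Arr C; g \<in> Arr C; Cod C f = Dom C g\<rbrakk> \<Longrightarrow> Dom C (g \<cdot> f) = Dom C f"
  and Cod_comp [simp]: "\<lbrakk>f \<in> Arr C; g \<in> Arr C; Cod C f = Dom C g\<rbrakk> \<Longrightarrow> Cod C (g \<cdot> f) = Cod C g"
  using is_category unfolding is_category_def by auto

lemma comp_Idt_left [simp]: "\<lbrakk>f \<in> Arr C; Cod C f = y\<rbrakk> \<Longrightarrow> Idt C y \<cdot> f = f"
  and comp_Idt_right [simp]: "\<lbrakk>f \<in> Arr C; Dom C f = x\<rbrakk> \<Longrightarrow> f \<cdot> Idt C x = f"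
  using is_category unfolding is_category_def by auto

lemma comp_assoc [simp]:
  "\<lbrakk>f \<in> Arr C; g \<in> Arr C; h \<in> Arr C; Cod C f = Dom C g; Cod C g = Dom C h\<rbrakk> \<Longrightarrow>
    (h \<cdot> g) \<cdot> f = h \<cdot> g \<cdot> f"
  using is_category unfolding is_category_def by metis

text \<open>With \<open>comp_assoc\<close> the simplifier keeps composites right-nested, where an equation
  \<open>g \<cdot> f = k\<close> no longer matches; \<open>comp_reassoc[OF e]\<close> is the rewrite rule to use instead.\<close>
lemma comp_reassoc:
  "\<lbrakk>g \<cdot> f = k; f \<in> Arr C; g \<in> Arr C; h \<in> Arr C; Cod C f = Dom C g; Cod C h = Dom C f\<rbrakk> \<Longrightarrow>
    g \<cdot> f \<cdot> h = k \<cdot> h"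
  by (metis comp_assoc)

lemma monicD:
  "\<lbrakk>monic C m; m \<cdot> g = m \<cdot> h; g \<in> Arr C; h \<in> Arr C; Cod C g = Dom C m; Cod C h = Dom C m;
    Dom C g = Dom C h\<rbrakk> \<Longrightarrow> g = h"
  unfolding monic_def by blast

lemma monic_Idt: "x \<in> Obj C \<Longrightarrow> monic C (Idt C x)"
  unfolding monic_def by auto

lemma monic_if_monic_comp:
  assumes "monic C (g \<cdot> f)" "f \<in> Arr C" "g \<in> Arr C" "Cod C f = Dom C g"
  shows "monic C f"
  unfolding monic_def
proof (intro conjI ballI impI)
  fix h k assume hk: "h \<in> Arr C" "k \<in> Arr C" "Cod C h = Dom C f" "Cod C k = Dom C f"
    "Dom C h = Dom C k" "f \<cdot> h = f \<cdot> k"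
  then have "(g \<cdot> f) \<cdot> h = (g \<cdot> f) \<cdot> k" using assms by simp
  then show "h = k" by (rule monicD[OF assms(1)]) (use assms hk in simp_all)
qed (rule assms(2))

lemma pullbackD:
  assumes "is_pullback C f g p q"
  shows "f \<in> Arr C" "g \<in> Arr C" "p \<in> Arr C" "q \<in> Arr C" "Cod C f = Cod C g"
    "Cod C p = Dom C f" "Cod C q = Dom C g" "Dom C q = Dom C p" "f \<cdot> p = g \<cdot> q"
  using assms unfolding is_pullback_def by auto

lemma pullback_universal:
  assumes pb: "is_pullback C f g p q"
    and a: "a \<in> hom C X (Dom C f)" and b: "b \<in> hom C X (Dom C g)" and eq: "f \<cdot> a = g \<cdot> b"
  shows "\<exists>!u. u \<in> hom C X (Dom C p) \<and> p \<cdot> u = a \<and> q \<cdot> u = b"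
proof -
  have "a \<in> Arr C" "b \<in> Arr C" "Cod C a = Dom C f" "Cod C b = Dom C g" "Dom C a = Dom C b"
    using a b by simp_all
  then have "\<exists>!u. u \<in> hom C (Dom C a) (Dom C p) \<and> p \<cdot> u = a \<and> q \<cdot> u = b"
    using pb eq unfolding is_pullback_def by blast
  then show ?thesis using a by simp
qed

lemma pullback_factor:
  "\<lbrakk>is_pullback C f g p q; a \<in> hom C X (Dom C f); b \<in> hom C X (Dom C g); f \<cdot> a = g \<cdot> b\<rbrakk> \<Longrightarrow>
    \<exists>u\<in>hom C X (Dom C p). p \<cdot> u = a \<and> q \<cdot> u = b"
  by (drule (3) pullback_universal) blast

lemma pullback_jointly_monic:
  assumes pb: "is_pullback C f g p q"
    and uv: "u \<in> Arr C" "v \<in> Arr C" "Cod C u = Dom C p" "Cod C v = Dom C p" "Dom C u = Dom C v"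
    and eq: "p \<cdot> u = p \<cdot> v" "q \<cdot> u = q \<cdot> v"
  shows "u = v"
proof -
  note sq = pullbackD[OF pb]
  have "\<exists>!w. w \<in> hom C (Dom C u) (Dom C p) \<and> p \<cdot> w = p \<cdot> u \<and> q \<cdot> w = q \<cdot> u"
    by (rule pullback_universal[OF pb]) (use sq uv in \<open>simp_all add: comp_reassoc[OF sq(9)]\<close>)
  then show ?thesis
    by (rule ex1_unique) (use uv eq in simp_all)
qed

lemma is_pullbackI:
  assumes arrows: "f \<in> Arr C" "g \<in> Arr C" "p \<in> Arr C" "q \<in> Arr C"
    and span: "Cod C p = Dom C f" "Cod C q = Dom C g" "Dom C q = Dom C p"
    and commutes: "f \<cdot> p = g \<cdot> q"
    and factor: "\<And>a b. \<lbrakk>a \<in> Arr C; b \<in> Arr C; Cod C a = Dom C f; Cod C b = Dom C g; Dom C b = Dom C a;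
      f \<cdot> a = g \<cdot> b\<rbrakk> \<Longrightarrow> \<exists>u\<in>hom C (Dom C a) (Dom C p). p \<cdot> u = a \<and> q \<cdot> u = b"
    and unique: "\<And>u v. \<lbrakk>u \<in> Arr C; v \<in> Arr C; Cod C u = Dom C p; Cod C v = Dom C p; Dom C v = Dom C u;
      p \<cdot> u = p \<cdot> v; q \<cdot> u = q \<cdot> v\<rbrakk> \<Longrightarrow> u = v"
  shows "is_pullback C f g p q"
proof -
  have "Cod C f = Cod C (f \<cdot> p)" "Cod C g = Cod C (g \<cdot> q)"
    using arrows span by simp_all
  then have "Cod C f = Cod C g" using commutes by simp
  moreover have "\<exists>!u. u \<in> hom C (Dom C a) (Dom C p) \<and> p \<cdot> u = a \<and> q \<cdot> u = b"
    if ab: "a \<in> Arr C" "b \<in> Arr C" "Cod C a = Dom C f" "Cod C b = Dom C g" "Dom C a = Dom C b"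
      "f \<cdot> a = g \<cdot> b" for a b
  proof -
    obtain u where "u \<in> hom C (Dom C a) (Dom C p)" "p \<cdot> u = a" "q \<cdot> u = b"
      using factor[OF ab(1-4) ab(5)[symmetric] ab(6)] by blast
    then show ?thesis using unique by auto
  qed
  ultimately show ?thesis
    unfolding is_pullback_def using arrows span commutes by auto
qed

lemma pullback_paste:
  assumes right: "is_pullback C f g p q" and left: "is_pullback C h p p' q'"
  shows "is_pullback C (f \<cdot> h) g p' (q \<cdot> q')"
proof -
  note R = pullbackD[OF right] and L = pullbackD[OF left]
  show ?thesis
  proof (rule is_pullbackI)
    fix a b assume ab: "a \<in> Arr C" "b \<in> Arr C" "Cod C a = Dom C (f \<cdot> h)" "Cod C b = Dom C g"
      "Dom C b = Dom C a" "(f \<cdot> h) \<cdot> a = g \<cdot> b"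
    have "\<exists>u\<in>hom C (Dom C a) (Dom C p). p \<cdot> u = h \<cdot> a \<and> q \<cdot> u = b"
      by (rule pullback_factor[OF right]) (use ab R L in simp_all)
    then obtain u where u: "u \<in> hom C (Dom C a) (Dom C p)" "p \<cdot> u = h \<cdot> a" "q \<cdot> u = b"
      by blast
    have "\<exists>v\<in>hom C (Dom C a) (Dom C p'). p' \<cdot> v = a \<and> q' \<cdot> v = u"
      by (rule pullback_factor[OF left]) (use ab u R L in simp_all)
    then obtain v where v: "v \<in> hom C (Dom C a) (Dom C p')" "p' \<cdot> v = a" "q' \<cdot> v = u"
      by blast
    show "\<exists>v\<in>hom C (Dom C a) (Dom C p'). p' \<cdot> v = a \<and> (q \<cdot> q') \<cdot> v = b"
      using u v R L by (intro bexI[of _ v]) simp_all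
  next
    fix v w assume vw: "v \<in> Arr C" "w \<in> Arr C" "Cod C v = Dom C p'" "Cod C w = Dom C p'"
      "Dom C w = Dom C v" "p' \<cdot> v = p' \<cdot> w" "(q \<cdot> q') \<cdot> v = (q \<cdot> q') \<cdot> w"
    have "q' \<cdot> v = q' \<cdot> w"
    proof (rule pullback_jointly_monic[OF right])
      show "p \<cdot> q' \<cdot> v = p \<cdot> q' \<cdot> w"
        using vw L(1-8) by (simp add: comp_reassoc[OF L(9)[symmetric]])
      show "q \<cdot> q' \<cdot> v = q \<cdot> q' \<cdot> w"
        using vw R L by simp
    qed (use vw L in simp_all)
    then show "v = w"
      by (rule pullback_jointly_monic[OF left, rotated -1]) (use vw in auto)
  qed (use R L in \<open>simp_all add: comp_reassoc[OF R(9)]\<close>)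
qed

end

definition pair :: "('o, 'a) category \<Rightarrow> 'a \<Rightarrow> 'a \<Rightarrow> 'a \<Rightarrow> 'a \<Rightarrow> 'a" where
  "pair C p1 p2 f g = (THE u. u \<in> hom C (Dom C f) (Dom C p1) \<and> Cmp C p1 u = f \<and> Cmp C p2 u = g)"

locale binary_product = category +
  fixes A B p1 p2
  assumes is_product: "is_product C A B p1 p2"
begin

lemma proj1_in_Arr [simp]: "p1 \<in> Arr C" and Cod_proj1 [simp]: "Cod C p1 = A"
  and proj2_in_Arr [simp]: "p2 \<in> Arr C" and Cod_proj2 [simp]: "Cod C p2 = B"
  and Dom_proj2 [simp]: "Dom C p2 = Dom C p1"
  and factor1_in_Obj [simp]: "A \<in> Obj C" and factor2_in_Obj [simp]: "B \<in> Obj C"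
  using is_product unfolding is_product_def by auto

lemma product_universal:
  "\<lbrakk>f \<in> Arr C; g \<in> Arr C; Cod C f = A; Cod C g = B; Dom C g = Dom C f\<rbrakk> \<Longrightarrow>
    \<exists>!u. u \<in> hom C (Dom C f) (Dom C p1) \<and> p1 \<cdot> u = f \<and> p2 \<cdot> u = g"
  using is_product unfolding is_product_def by (metis (no_types, lifting))

lemma pair_spec:
  assumes "f \<in> Arr C" "g \<in> Arr C" "Cod C f = A" "Cod C g = B" "Dom C g = Dom C f"
  shows "pair C p1 p2 f g \<in> hom C (Dom C f) (Dom C p1) \<and>
    p1 \<cdot> pair C p1 p2 f g = f \<and> p2 \<cdot> pair C p1 p2 f g = g"
  unfolding pair_def by (rule theI', rule product_universal) (use assms in auto)

context
  fixes f g
  assumes fg: "f \<in> Arr C" "g \<in> Arr C" "Cod C f = A" "Cod C g = B" "Dom C g = Dom C f"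
begin

lemma pair_in_Arr [simp]: "pair C p1 p2 f g \<in> Arr C"
  and Dom_pair [simp]: "Dom C (pair C p1 p2 f g) = Dom C f"
  and Cod_pair [simp]: "Cod C (pair C p1 p2 f g) = Dom C p1"
  and proj1_pair [simp]: "p1 \<cdot> pair C p1 p2 f g = f"
  and proj2_pair [simp]: "p2 \<cdot> pair C p1 p2 f g = g"
  using pair_spec[OF fg] by auto

end

lemma product_arr_eqI:
  assumes uv: "u \<in> Arr C" "v \<in> Arr C" "Cod C u = Dom C p1" "Cod C v = Dom C p1" "Dom C u = Dom C v"
    and eq: "p1 \<cdot> u = p1 \<cdot> v" "p2 \<cdot> u = p2 \<cdot> v"
  shows "u = v"
proof -
  have "\<exists>!w. w \<in> hom C (Dom C (p1 \<cdot> u)) (Dom C p1) \<and> p1 \<cdot> w = p1 \<cdot> u \<and> p2 \<cdot> w = p2 \<cdot> u"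
    by (rule product_universal) (use uv in simp_all)
  then show ?thesis
    by (rule ex1_unique) (use uv eq in simp_all)
qed

lemma pair_comp [simp]:
  assumes "f \<in> Arr C" "g \<in> Arr C" "Cod C f = A" "Cod C g = B" "Dom C g = Dom C f"
    and "h \<in> Arr C" "Cod C h = Dom C f"
  shows "pair C p1 p2 f g \<cdot> h = pair C p1 p2 (f \<cdot> h) (g \<cdot> h)"
proof (rule product_arr_eqI)
  show "p1 \<cdot> pair C p1 p2 f g \<cdot> h = p1 \<cdot> pair C p1 p2 (f \<cdot> h) (g \<cdot> h)"
    by (subst comp_assoc[symmetric]) (use assms in simp_all)
  show "p2 \<cdot> pair C p1 p2 f g \<cdot> h = p2 \<cdot> pair C p1 p2 (f \<cdot> h) (g \<cdot> h)"
    by (subst comp_assoc[symmetric]) (use assms in simp_all)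
qed (use assms in simp_all)

lemma pair_eq_pair_iff [simp]:
  assumes "f \<in> Arr C" "g \<in> Arr C" "Cod C f = A" "Cod C g = B" "Dom C g = Dom C f"
    and "f' \<in> Arr C" "g' \<in> Arr C" "Cod C f' = A" "Cod C g' = B" "Dom C g' = Dom C f'"
  shows "pair C p1 p2 f g = pair C p1 p2 f' g' \<longleftrightarrow> f = f' \<and> g = g'"
  using assms proj1_pair proj2_pair by metis

lemma monic_graph:
  assumes "f \<in> Arr C" "Dom C f = B" "Cod C f = A"
  shows "monic C (pair C p1 p2 f (Idt C B))"
proof (rule monic_if_monic_comp)
  show "monic C (p2 \<cdot> pair C p1 p2 f (Idt C B))"
    using assms monic_Idt by simp
qed (use assms in simp_all)

end

text \<open>\<open>pair C r1 r2 m (Idt C L)\<close> is the graph \<open>\<langle>m, 1\<rangle> : L \<rightarrow> G \<times> L\<close> and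
  \<open>pair C r1 r2 (m \<cdot> d1) d2\<close> is \<open>m \<times> 1 : L \<times> L \<rightarrow> G \<times> L\<close>.\<close>
lemma (in category) diagonal_pullback_of_graph:
  assumes LL: "is_product C L L d1 d2" and GL: "is_product C G L r1 r2"
    and m: "monic C m" "m \<in> hom C L G"
  shows "is_pullback C (pair C r1 r2 (m \<cdot> d1) d2) (pair C r1 r2 m (Idt C L))
    (pair C d1 d2 (Idt C L) (Idt C L)) (Idt C L)"
proof -
  interpret LL: binary_product C L L d1 d2 by unfold_locales (rule LL)
  interpret GL: binary_product C G L r1 r2 by unfold_locales (rule GL)
  note [simp] = m(2)[unfolded in_hom_iff]
  show ?thesis
  proof (rule is_pullbackI)
    fix a b assume a: "a \<in> Arr C" "Cod C a = Dom C (pair C r1 r2 (m \<cdot> d1) d2)"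
      and b: "b \<in> Arr C" "Cod C b = Dom C (pair C r1 r2 m (Idt C L))" "Dom C b = Dom C a"
      and eq: "pair C r1 r2 (m \<cdot> d1) d2 \<cdot> a = pair C r1 r2 m (Idt C L) \<cdot> b"
    note [simp] = a b
    from eq have "m \<cdot> d1 \<cdot> a = m \<cdot> b"
      by simp
    then have d1a: "d1 \<cdot> a = b"
      by (rule monicD[OF m(1)]) simp_all
    from eq have d2a: "d2 \<cdot> a = b"
      by simp
    have "pair C d1 d2 (Idt C L) (Idt C L) \<cdot> b = a"
      by (rule LL.product_arr_eqI) (use d1a d2a in simp_all)
    then show "\<exists>u\<in>hom C (Dom C a) (Dom C (pair C d1 d2 (Idt C L) (Idt C L))).
        pair C d1 d2 (Idt C L) (Idt C L) \<cdot> u = a \<and> Idt C L \<cdot> u = b"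
      by (intro bexI[of _ b]) simp_all
  qed simp_all
qed

locale subobject_classifier = category +
  fixes \<Omega> tr
  assumes true_in_Arr [simp]: "tr \<in> Arr C" and Cod_true [simp]: "Cod C tr = \<Omega>"
    and classifies: "monic C m \<Longrightarrow> \<exists>!\<chi>. \<chi> \<in> hom C (Cod C m) \<Omega> \<and> (\<exists>u. is_pullback C \<chi> tr m u)"
begin

definition char_map where
  "char_map m = (THE \<chi>. \<chi> \<in> hom C (Cod C m) \<Omega> \<and> (\<exists>u. is_pullback C \<chi> tr m u))"

lemma char_map_spec:
  "monic C m \<Longrightarrow> char_map m \<in> hom C (Cod C m) \<Omega> \<and> (\<exists>u. is_pullback C (char_map m) tr m u)"
  unfolding char_map_def by (rule theI'[OF classifies])

lemma char_map_in_Arr [simp]: "monic C m \<Longrightarrow> char_map m \<in> Arr C"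
  and Dom_char_map [simp]: "monic C m \<Longrightarrow> Dom C (char_map m) = Cod C m"
  and Cod_char_map [simp]: "monic C m \<Longrightarrow> Cod C (char_map m) = \<Omega>"
  using char_map_spec by auto

lemma char_map_pullback:
  assumes "monic C m"
  obtains u where "is_pullback C (char_map m) tr m u"
  using char_map_spec[OF assms] by blast

lemma char_map_eqI:
  assumes "monic C m" "\<chi> \<in> hom C (Cod C m) \<Omega>" "is_pullback C \<chi> tr m u"
  shows "\<chi> = char_map m"
  using classifies[OF assms(1)] char_map_spec[OF assms(1)] assms(2,3) by blast

lemma char_diagonal_eq:
  assumes LL: "is_product C L L d1 d2" and GL: "is_product C G L r1 r2"
    and m: "monic C m" "m \<in> hom C L G"
  shows "char_map (pair C d1 d2 (Idt C L) (Idt C L)) =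
    char_map (pair C r1 r2 m (Idt C L)) \<cdot> pair C r1 r2 (m \<cdot> d1) d2"
proof -
  interpret LL: binary_product C L L d1 d2 by unfold_locales (rule LL)
  interpret GL: binary_product C G L r1 r2 by unfold_locales (rule GL)
  note [simp] = m(2)[unfolded in_hom_iff]
  have graph: "monic C (pair C r1 r2 m (Idt C L))"
    by (rule GL.monic_graph) simp_all
  have diagonal: "monic C (pair C d1 d2 (Idt C L) (Idt C L))"
    by (rule LL.monic_graph) simp_all
  obtain u where "is_pullback C (char_map (pair C r1 r2 m (Idt C L))) tr (pair C r1 r2 m (Idt C L)) u"
    using char_map_pullback[OF graph] .
  note pb = pullback_paste[OF this diagonal_pullback_of_graph[OF LL GL m]]
  show ?thesis
    by (rule char_map_eqI[OF diagonal _ pb, symmetric]) (use graph in simp_all)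
qed

lemma char_graph_eq_trueD:
  assumes GL: "is_product C G L r1 r2"
    and m: "monic C m" "m \<in> hom C L G"
    and gx: "g \<in> hom C X G" "x \<in> hom C X L"
    and b: "b \<in> hom C X (Dom C tr)"
    and eq: "char_map (pair C r1 r2 m (Idt C L)) \<cdot> pair C r1 r2 g x = tr \<cdot> b"
  shows "g = m \<cdot> x"
proof -
  interpret GL: binary_product C G L r1 r2 by unfold_locales (rule GL)
  note [simp] = m(2)[unfolded in_hom_iff] gx[unfolded in_hom_iff] b[unfolded in_hom_iff]
  have graph: "monic C (pair C r1 r2 m (Idt C L))"
    by (rule GL.monic_graph) simp_all
  obtain u where "is_pullback C (char_map (pair C r1 r2 m (Idt C L))) tr (pair C r1 r2 m (Idt C L)) u"
    using char_map_pullback[OF graph] .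
  then have "\<exists>w\<in>hom C X (Dom C (pair C r1 r2 m (Idt C L))).
      pair C r1 r2 m (Idt C L) \<cdot> w = pair C r1 r2 g x \<and> u \<cdot> w = b"
    by (rule pullback_factor) (use graph eq in simp_all)
  then show ?thesis by auto
qed

end

text \<open>\<open>E\<close> is the exponential \<open>\<Omega>\<^sup>L\<close> with evaluation \<open>ev : E \<times> L \<rightarrow> \<Omega>\<close>; \<open>transpose\<close> is its
  universal property as stated in \<^const>\<open>cartesian_closed\<close>.\<close>
locale power_object = subobject_classifier +
  fixes L E ev \<pi>1 \<pi>2
  assumes binary_products: "has_binary_products C"
    and evaluation_product: "is_product C E L \<pi>1 \<pi>2"
    and evaluation: "ev \<in> hom C (Dom C \<pi>1) \<Omega>"
    and transpose: "\<lbrakk>A \<in> Obj C; is_product C A L q1 q2; f \<in> hom C (Dom C q1) \<Omega>\<rbrakk> \<Longrightarrow>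
      \<exists>!g. g \<in> hom C A E \<and>
        (\<exists>h\<in>hom C (Dom C q1) (Dom C \<pi>1). \<pi>1 \<cdot> h = g \<cdot> q1 \<and> \<pi>2 \<cdot> h = q2 \<and> ev \<cdot> h = f)"
begin

sublocale E: binary_product C E L \<pi>1 \<pi>2
  by unfold_locales (rule evaluation_product)

lemma ev_in_Arr [simp]: "ev \<in> Arr C" and Dom_ev [simp]: "Dom C ev = Dom C \<pi>1"
  and Cod_ev [simp]: "Cod C ev = \<Omega>"
  using evaluation by simp_all

lemma productE:
  assumes "A \<in> Obj C" "B \<in> Obj C"
  obtains p1 p2 where "is_product C A B p1 p2"
  using binary_products assms unfolding has_binary_products_def by blast

definition uncurry where
  "uncurry q1 q2 g = ev \<cdot> pair C \<pi>1 \<pi>2 (g \<cdot> q1) q2"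

lemma ex1_uncurry:
  assumes q: "is_product C A L q1 q2" and f: "f \<in> hom C (Dom C q1) \<Omega>"
  shows "\<exists>!g. g \<in> hom C A E \<and> uncurry q1 q2 g = f"
proof -
  interpret Q: binary_product C A L q1 q2 by unfold_locales (rule q)
  have "(\<exists>h\<in>hom C (Dom C q1) (Dom C \<pi>1). \<pi>1 \<cdot> h = g \<cdot> q1 \<and> \<pi>2 \<cdot> h = q2 \<and> ev \<cdot> h = f)
      \<longleftrightarrow> uncurry q1 q2 g = f" if g: "g \<in> hom C A E" for g
  proof
    assume "\<exists>h\<in>hom C (Dom C q1) (Dom C \<pi>1). \<pi>1 \<cdot> h = g \<cdot> q1 \<and> \<pi>2 \<cdot> h = q2 \<and> ev \<cdot> h = f"
    then obtain h where h: "h \<in> hom C (Dom C q1) (Dom C \<pi>1)" "\<pi>1 \<cdot> h = g \<cdot> q1" "\<pi>2 \<cdot> h = q2" "ev \<cdot> h = f"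
      by blast
    have "h = pair C \<pi>1 \<pi>2 (g \<cdot> q1) q2"
      by (rule E.product_arr_eqI) (use g h in simp_all)
    with h(4) show "uncurry q1 q2 g = f"
      unfolding uncurry_def by simp
  next
    assume "uncurry q1 q2 g = f"
    then show "\<exists>h\<in>hom C (Dom C q1) (Dom C \<pi>1). \<pi>1 \<cdot> h = g \<cdot> q1 \<and> \<pi>2 \<cdot> h = q2 \<and> ev \<cdot> h = f"
      unfolding uncurry_def using g by (intro bexI[of _ "pair C \<pi>1 \<pi>2 (g \<cdot> q1) q2"]) simp_all
  qed
  with transpose[OF Q.factor1_in_Obj q f] show ?thesis
    by blast
qed

lemma uncurry_inj:
  assumes q: "is_product C A L q1 q2" and g: "g \<in> hom C A E" "g' \<in> hom C A E"
    and eq: "uncurry q1 q2 g = uncurry q1 q2 g'"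
  shows "g = g'"
proof -
  interpret Q: binary_product C A L q1 q2 by unfold_locales (rule q)
  have "uncurry q1 q2 g \<in> hom C (Dom C q1) \<Omega>"
    using g unfolding uncurry_def by simp
  from ex1_uncurry[OF q this] show ?thesis
    by (rule ex1_unique) (use g eq in simp_all)
qed

lemma uncurry_comp:
  assumes q: "is_product C A L q1 q2" and q': "is_product C A' L q1' q2'"
    and g: "g \<in> hom C A E" and h: "h \<in> hom C A' A"
  shows "uncurry q1' q2' (g \<cdot> h) = uncurry q1 q2 g \<cdot> pair C q1 q2 (h \<cdot> q1') q2'"
proof -
  interpret Q: binary_product C A L q1 q2 by unfold_locales (rule q)
  interpret Q': binary_product C A' L q1' q2' by unfold_locales (rule q')
  note [simp] = g[unfolded in_hom_iff] h[unfolded in_hom_iff]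
  show ?thesis
    unfolding uncurry_def by simp
qed

end

locale singleton_map = power_object +
  fixes d1 d2 s
  assumes diagonal_product: "is_product C L L d1 d2"
    and singleton_in_hom: "s \<in> hom C L E"
    and uncurry_singleton: "uncurry d1 d2 s = char_map (pair C d1 d2 (Idt C L) (Idt C L))"
begin

sublocale LL: binary_product C L L d1 d2
  by unfold_locales (rule diagonal_product)

lemma singleton_in_Arr [simp]: "s \<in> Arr C" and Dom_singleton [simp]: "Dom C s = L"
  and Cod_singleton [simp]: "Cod C s = E"
  using singleton_in_hom by simp_all

lemma graph_extension_comp:
  assumes GL: "is_product C G L r1 r2" and m: "monic C m" "m \<in> hom C L G"
    and c: "c \<in> hom C G E" "uncurry r1 r2 c = char_map (pair C r1 r2 m (Idt C L))"
  shows "c \<cdot> m = s"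
proof -
  interpret GL: binary_product C G L r1 r2 by unfold_locales (rule GL)
  note [simp] = m(2)[unfolded in_hom_iff] c(1)[unfolded in_hom_iff]
  have "uncurry d1 d2 (c \<cdot> m) = char_map (pair C r1 r2 m (Idt C L)) \<cdot> pair C r1 r2 (m \<cdot> d1) d2"
    using uncurry_comp[OF GL diagonal_product c(1) m(2)] c(2) by simp
  also have "\<dots> = uncurry d1 d2 s"
    using char_diagonal_eq[OF diagonal_product GL m] uncurry_singleton by simp
  finally show ?thesis
    by (rule uncurry_inj[OF diagonal_product, rotated -1]) simp_all
qed

lemma graph_extension_pullback:
  assumes GL: "is_product C G L r1 r2" and m: "monic C m" "m \<in> hom C L G"
    and c: "c \<in> hom C G E" "uncurry r1 r2 c = char_map (pair C r1 r2 m (Idt C L))"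
    and x: "x \<in> hom C X L" and g: "g \<in> hom C X G" and eq: "s \<cdot> x = c \<cdot> g"
  shows "g = m \<cdot> x"
proof -
  interpret GL: binary_product C G L r1 r2 by unfold_locales (rule GL)
  note [simp] = m(2)[unfolded in_hom_iff] c(1)[unfolded in_hom_iff]
    x[unfolded in_hom_iff] g[unfolded in_hom_iff]
  define R where "R = pair C r1 r2 m (Idt C L)"
  define \<delta> where "\<delta> = pair C d1 d2 (Idt C L) (Idt C L)"
  have R: "monic C R"
    unfolding R_def by (rule GL.monic_graph) simp_all
  have \<delta>: "monic C \<delta>"
    unfolding \<delta>_def by (rule LL.monic_graph) simp_all
  have [simp]: "Dom C \<delta> = L" "Cod C \<delta> = Dom C d1"
    unfolding \<delta>_def by simp_all
  obtain u where "is_pullback C (char_map \<delta>) tr \<delta> u"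
    using char_map_pullback[OF \<delta>] .
  note u = pullbackD[OF this]
  have "X \<in> Obj C"
    using Dom_in_Obj[of x] by simp
  then obtain e1 e2 where XL: "is_product C X L e1 e2"
    by (rule productE[OF _ E.factor2_in_Obj])
  interpret XL: binary_product C X L e1 e2 by unfold_locales (rule XL)
  have "char_map R \<cdot> pair C r1 r2 (g \<cdot> e1) e2 = uncurry e1 e2 (c \<cdot> g)"
    using uncurry_comp[OF GL XL c(1) g] c(2) unfolding R_def by simp
  also have "\<dots> = uncurry e1 e2 (s \<cdot> x)"
    using eq by simp
  also have "\<dots> = char_map \<delta> \<cdot> pair C d1 d2 (x \<cdot> e1) e2"
    using uncurry_comp[OF diagonal_product XL singleton_in_hom x] uncurry_singleton
    unfolding \<delta>_def by simp
  \<comment> \<open>evaluate at \<open>\<langle>1, x\<rangle> : X \<rightarrow> X \<times> L\<close>\<close>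
  finally have "(char_map R \<cdot> pair C r1 r2 (g \<cdot> e1) e2) \<cdot> pair C e1 e2 (Idt C X) x =
      (char_map \<delta> \<cdot> pair C d1 d2 (x \<cdot> e1) e2) \<cdot> pair C e1 e2 (Idt C X) x"
    by simp
  then have "char_map R \<cdot> pair C r1 r2 g x = char_map \<delta> \<cdot> \<delta> \<cdot> x"
    using R \<delta> unfolding R_def \<delta>_def by simp
  also have "\<dots> = tr \<cdot> u \<cdot> x"
    using u \<delta> by (simp add: comp_reassoc[OF u(9)])
  finally show "g = m \<cdot> x"
    unfolding R_def by (rule char_graph_eq_trueD[OF GL m g x, rotated]) (use u \<delta> in simp)
qed

lemma singleton_extension:
  assumes m: "monic C m" "m \<in> hom C L G"
  obtains c where "c \<in> hom C G E" "c \<cdot> m = s"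
    "\<And>X x g. \<lbrakk>x \<in> hom C X L; g \<in> hom C X G; s \<cdot> x = c \<cdot> g\<rbrakk> \<Longrightarrow> g = m \<cdot> x"
proof -
  note [simp] = m(2)[unfolded in_hom_iff]
  have "G \<in> Obj C"
    using Cod_in_Obj[of m] by simp
  then obtain r1 r2 where GL: "is_product C G L r1 r2"
    by (rule productE[OF _ E.factor2_in_Obj])
  interpret GL: binary_product C G L r1 r2 by unfold_locales (rule GL)
  have "monic C (pair C r1 r2 m (Idt C L))"
    by (rule GL.monic_graph) simp_all
  then obtain c where c: "c \<in> hom C G E" "uncurry r1 r2 c = char_map (pair C r1 r2 m (Idt C L))"
    using ex1_uncurry[OF GL, of "char_map (pair C r1 r2 m (Idt C L))"] by auto
  show thesis
    by (rule that[OF c(1) graph_extension_comp[OF GL m c]]) (rule graph_extension_pullback[OF GL m c])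
qed

lemma singleton_monic: "monic C s"
proof -
  have L: "L \<in> Obj C" by simp
  obtain c where c: "c \<in> hom C L E" "c \<cdot> Idt C L = s"
    and ext: "\<And>X x g. \<lbrakk>x \<in> hom C X L; g \<in> hom C X L; s \<cdot> x = c \<cdot> g\<rbrakk> \<Longrightarrow> g = Idt C L \<cdot> x"
    using singleton_extension[OF monic_Idt[OF L]] L by auto
  have "c = s" using c by simp
  show ?thesis
    unfolding monic_def
  proof (intro conjI ballI impI)
    fix g h assume gh: "g \<in> Arr C" "h \<in> Arr C" "Cod C g = Dom C s" "Cod C h = Dom C s" "Dom C g = Dom C h"
      "s \<cdot> g = s \<cdot> h"
    then have "h = Idt C L \<cdot> g"
      using \<open>c = s\<close> by (intro ext[of g "Dom C g" h]) simp_all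
    then show "g = h" using gh by simp
  qed simp
qed

end

lemma (in power_object) singleton_mapE:
  obtains d1 d2 s where "singleton_map C \<Omega> tr L E ev \<pi>1 \<pi>2 d1 d2 s"
proof -
  obtain d1 d2 where LL: "is_product C L L d1 d2"
    by (rule productE[OF E.factor2_in_Obj E.factor2_in_Obj])
  interpret LL: binary_product C L L d1 d2 by unfold_locales (rule LL)
  have "monic C (pair C d1 d2 (Idt C L) (Idt C L))"
    by (rule LL.monic_graph) simp_all
  then obtain s where "s \<in> hom C L E" "uncurry d1 d2 s = char_map (pair C d1 d2 (Idt C L) (Idt C L))"
    using ex1_uncurry[OF LL, of "char_map (pair C d1 d2 (Idt C L) (Idt C L))"] by auto
  with LL have "singleton_map C \<Omega> tr L E ev \<pi>1 \<pi>2 d1 d2 s"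
    by unfold_locales
  then show thesis by (rule that)
qed

definition strong_amendment :: "('o, 'a) category \<Rightarrow> 'a \<Rightarrow> 'a \<Rightarrow> 'a \<Rightarrow> bool" where
  "strong_amendment C tL t' \<beta> \<longleftrightarrow>
     monic C t' \<and> Dom C t' = Dom C tL \<and> \<beta> \<in> hom C (Cod C t') (Cod C tL) \<and> Cmp C \<beta> t' = tL \<and>
     (\<forall>m \<alpha>. monic C m \<and> Dom C m = Dom C tL \<and> \<alpha> \<in> hom C (Cod C m) (Cod C tL) \<and> Cmp C \<alpha> m = tL \<longrightarrow>
        (\<exists>\<alpha>'. \<alpha>' \<in> hom C (Cod C m) (Cod C t') \<and> Cmp C \<alpha>' m = t' \<and> Cmp C \<beta> \<alpha>' = \<alpha> \<and>
           is_pullback C t' \<alpha>' (Idt C (Dom C tL)) m))"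

lemma strongly_amendable_iff:
  "strongly_amendable C \<longleftrightarrow> (\<forall>tL\<in>Arr C. \<exists>t' \<beta>. strong_amendment C tL t' \<beta>)"
  unfolding strongly_amendable_def strong_amendment_def by (rule refl)

context singleton_map
begin

lemma ex_amending_arrow:
  assumes EL': "is_product C E L' \<rho>1 \<rho>2" and tL: "tL \<in> hom C L L'"
    and m: "monic C m" "Dom C m = L" and \<alpha>: "\<alpha> \<in> hom C (Cod C m) L'" "\<alpha> \<cdot> m = tL"
  shows "\<exists>\<alpha>'. \<alpha>' \<in> hom C (Cod C m) (Dom C \<rho>1) \<and> \<alpha>' \<cdot> m = pair C \<rho>1 \<rho>2 s tL \<and> \<rho>2 \<cdot> \<alpha>' = \<alpha> \<and>
    is_pullback C (pair C \<rho>1 \<rho>2 s tL) \<alpha>' (Idt C L) m"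
proof -
  interpret EL': binary_product C E L' \<rho>1 \<rho>2 by unfold_locales (rule EL')
  have [simp]: "m \<in> Arr C" using m(1) unfolding monic_def by blast
  note [simp] = m(2) \<alpha>(1)[unfolded in_hom_iff] tL[unfolded in_hom_iff]
  have m_hom: "m \<in> hom C L (Cod C m)" by simp
  obtain c where c: "c \<in> hom C (Cod C m) E" "c \<cdot> m = s"
    and ext: "\<And>X x g. \<lbrakk>x \<in> hom C X L; g \<in> hom C X (Cod C m); s \<cdot> x = c \<cdot> g\<rbrakk> \<Longrightarrow> g = m \<cdot> x"
    using singleton_extension[OF m(1) m_hom] by blast
  note [simp] = c(1)[unfolded in_hom_iff]
  have comm: "pair C \<rho>1 \<rho>2 c \<alpha> \<cdot> m = pair C \<rho>1 \<rho>2 s tL"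
    using c(2) \<alpha>(2) by simp
  have "is_pullback C (pair C \<rho>1 \<rho>2 s tL) (pair C \<rho>1 \<rho>2 c \<alpha>) (Idt C L) m"
  proof (rule is_pullbackI)
    fix a b assume a: "a \<in> Arr C" "Cod C a = Dom C (pair C \<rho>1 \<rho>2 s tL)"
      and b: "b \<in> Arr C" "Cod C b = Dom C (pair C \<rho>1 \<rho>2 c \<alpha>)" "Dom C b = Dom C a"
      and eq: "pair C \<rho>1 \<rho>2 s tL \<cdot> a = pair C \<rho>1 \<rho>2 c \<alpha> \<cdot> b"
    note [simp] = a b
    from eq have "s \<cdot> a = c \<cdot> b"
      by simp
    then have "b = m \<cdot> a"
      by (intro ext[of a "Dom C a" b]) simp_all
    then show "\<exists>u\<in>hom C (Dom C a) (Dom C (Idt C L)). Idt C L \<cdot> u = a \<and> m \<cdot> u = b"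
      by (intro bexI[of _ a]) simp_all
  qed (use comm in simp_all)
  with comm show ?thesis
    by (intro exI[of _ "pair C \<rho>1 \<rho>2 c \<alpha>"]) simp
qed

lemma ex_strong_amendment:
  assumes tL: "tL \<in> hom C L L'"
  shows "\<exists>t' \<beta>. strong_amendment C tL t' \<beta>"
proof -
  note [simp] = tL[unfolded in_hom_iff]
  have "L' \<in> Obj C"
    using Cod_in_Obj[of tL] by simp
  then obtain \<rho>1 \<rho>2 where EL': "is_product C E L' \<rho>1 \<rho>2"
    by (rule productE[OF E.factor1_in_Obj])
  interpret EL': binary_product C E L' \<rho>1 \<rho>2 by unfold_locales (rule EL')
  have "monic C (pair C \<rho>1 \<rho>2 s tL)"
    by (rule monic_if_monic_comp[of \<rho>1]) (use singleton_monic in simp_all)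
  with ex_amending_arrow[OF EL' tL] show ?thesis
    unfolding strong_amendment_def
    by (intro exI[of _ "pair C \<rho>1 \<rho>2 s tL"] exI[of _ \<rho>2]) simp
qed

end

lemma topos_subobject_classifier:
  assumes "topos C"
  obtains \<Omega> tr where "subobject_classifier C \<Omega> tr"
proof -
  have cat: "is_category C" and "has_subobject_classifier C"
    using assms unfolding topos_def by blast+
  then obtain one \<Omega> tr where tr: "tr \<in> hom C one \<Omega>"
    and classifies: "\<forall>m. monic C m \<longrightarrow> (\<exists>!\<chi>. \<chi> \<in> hom C (Cod C m) \<Omega> \<and> (\<exists>u. is_pullback C \<chi> tr m u))"
    unfolding has_subobject_classifier_def by (elim exE conjE) (rule that)
  have "subobject_classifier C \<Omega> tr"
  proof unfold_locales
    show "is_category C" by (rule cat)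
    show "tr \<in> Arr C" "Cod C tr = \<Omega>" using tr unfolding hom_def by simp_all
    fix m assume "monic C m"
    then show "\<exists>!\<chi>. \<chi> \<in> hom C (Cod C m) \<Omega> \<and> (\<exists>u. is_pullback C \<chi> tr m u)"
      by (rule classifies[rule_format])
  qed
  then show thesis by (rule that)
qed

lemma (in subobject_classifier) topos_power_object:
  assumes "topos C" "L \<in> Obj C"
  obtains E ev \<pi>1 \<pi>2 where "power_object C \<Omega> tr L E ev \<pi>1 \<pi>2"
proof -
  have products: "has_binary_products C" and ccc: "cartesian_closed C"
    using assms(1) unfolding topos_def cartesian_closed_def by blast+
  from ccc have exponentials: "\<forall>B\<in>Obj C. \<forall>D\<in>Obj C. \<exists>E ev \<pi>1 \<pi>2. is_product C E B \<pi>1 \<pi>2 \<and>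
      ev \<in> hom C (Dom C \<pi>1) D \<and>
      (\<forall>A\<in>Obj C. \<forall>q1 q2. is_product C A B q1 q2 \<longrightarrow> (\<forall>f\<in>hom C (Dom C q1) D. \<exists>!g. g \<in> hom C A E \<and>
         (\<exists>h\<in>hom C (Dom C q1) (Dom C \<pi>1). \<pi>1 \<cdot> h = g \<cdot> q1 \<and> \<pi>2 \<cdot> h = q2 \<and> ev \<cdot> h = f)))"
    unfolding cartesian_closed_def by (rule conjunct2)
  have "\<Omega> \<in> Obj C"
    using Cod_in_Obj[OF true_in_Arr] by simp
  from exponentials[rule_format, OF assms(2) this] obtain E ev \<pi>1 \<pi>2
    where E: "is_product C E L \<pi>1 \<pi>2" and ev: "ev \<in> hom C (Dom C \<pi>1) \<Omega>"
      and transpose: "\<forall>A\<in>Obj C. \<forall>q1 q2. is_product C A L q1 q2 \<longrightarrow> (\<forall>f\<in>hom C (Dom C q1) \<Omega>.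
        \<exists>!g. g \<in> hom C A E \<and>
          (\<exists>h\<in>hom C (Dom C q1) (Dom C \<pi>1). \<pi>1 \<cdot> h = g \<cdot> q1 \<and> \<pi>2 \<cdot> h = q2 \<and> ev \<cdot> h = f))"
    by (elim exE conjE) (rule that)
  have "power_object C \<Omega> tr L E ev \<pi>1 \<pi>2"
    by unfold_locales (fact products, fact E, fact ev, rule transpose[rule_format])
  then show thesis by (rule that)
qed

theorem corollary2:
  fixes C :: "('o, 'a) category"
  assumes "topos C"
  shows "strongly_amendable C"
  unfolding strongly_amendable_iff
proof
  fix tL assume tL: "tL \<in> Arr C"
  obtain \<Omega> tr where "subobject_classifier C \<Omega> tr"
    using topos_subobject_classifier[OF assms] .
  then interpret subobject_classifier C \<Omega> tr .
  have "Dom C tL \<in> Obj C" using tL by simp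
  then obtain E ev \<pi>1 \<pi>2 where "power_object C \<Omega> tr (Dom C tL) E ev \<pi>1 \<pi>2"
    by (rule topos_power_object[OF assms])
  then interpret power_object C \<Omega> tr "Dom C tL" E ev \<pi>1 \<pi>2 .
  obtain d1 d2 s where "singleton_map C \<Omega> tr (Dom C tL) E ev \<pi>1 \<pi>2 d1 d2 s"
    by (rule singleton_mapE)
  then interpret singleton_map C \<Omega> tr "Dom C tL" E ev \<pi>1 \<pi>2 d1 d2 s .
  show "\<exists>t' \<beta>. strong_amendment C tL t' \<beta>"
    by (rule ex_strong_amendment) (simp add: tL)
qed

end
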